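(* Let $\mu$ be a probability measure on $[0,1]$, absolutely continuous with continuous density $f_\mu$, and let $q\in(0,1)$. Then the problem $\min_{y\in[0,1]}\mathcal{W}(y)$, where $\mathcal{W}(y)=\int_{[y-R_{\mu,q}(y),\,y+R_{\mu,q}(y)]}|x-y|\,d\mu(x)$, admits at least one solution. Moreover, if $\bar y$ is a solution, then the percentile mechanism $\mathcal{PM}_{p}$ with $p=F_\mu(\bar y)$ is optimal.
   Context: $F_\mu$ is the cumulative distribution function of $\mu$. The radius function $R_{\mu,q}(y)$ is the smallest $r\ge 0$ with $\mu([y-r,y+r])=q$. Single-facility setting: $n$ agents at $\vec x=(x_1,\dots,x_n)\in[0,1]^n$; a facility at $y$ accommodates the $\lfloor qn\rfloor$ agents closest to $y$ (ties arbitrary); an accommodated agent $i$ gets utility $1-|x_i-y|$, others get $0$; the normalized social welfare is $SW(\vec x,y)=\frac1n\sum_i u_i$. For $p\in[0,1]$, the percentile mechanism $\mathcal{PM}_p$ places the facility at the $(\lfloor p(n-1)\rfloor+1)$-th smallest of $x_1,\dots,x_n$. With $X_1,\dots,X_n$ i.i.d. of law $\mu$, $\mathcal{PM}_p$ is called optimal if $\lim_{n\to\infty}\mathbb{E}[SW(\vec X,\mathcal{PM}_p(\vec X))]$ exists and equals $\max_{y\in[0,1]}\big(q-\mathcal{W}(y)\big)$ (the largest limiting expected social welfare achievable by any fixed facility position). *)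

theory Defs
  imports "HOL-Probability.Probability"
begin

definition mu_of :: "(real \<Rightarrow> real) \<Rightarrow> real measure" where
  "mu_of f = density lborel (\<lambda>x. ennreal (f x) * indicator {0..1} x)"

definition cdf_of :: "real measure \<Rightarrow> real \<Rightarrow> real" where
  "cdf_of M y = measure M {..y}"

definition radius :: "real measure \<Rightarrow> real \<Rightarrow> real \<Rightarrow> real" where
  "radius M q y = Inf {r. r \<ge> 0 \<and> measure M {y - r..y + r} = q}"

definition W_cost :: "real measure \<Rightarrow> real \<Rightarrow> real \<Rightarrow> real" where
  "W_cost M q y = (LINT x:{y - radius M q y..y + radius M q y}|M. \<bar>x - y\<bar>)"

definition accommodated_sets :: "real \<Rightarrow> nat \<Rightarrow> (nat \<Rightarrow> real) \<Rightarrow> real \<Rightarrow> nat set set" where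
  "accommodated_sets q n x y =
     {S. S \<subseteq> {..<n} \<and> card S = nat \<lfloor>q * real n\<rfloor> \<and>
         (\<forall>i\<in>S. \<forall>j\<in>{..<n} - S. \<bar>x i - y\<bar> \<le> \<bar>x j - y\<bar>)}"

definition social_welfare :: "real \<Rightarrow> nat \<Rightarrow> (nat \<Rightarrow> real) \<Rightarrow> real \<Rightarrow> real" where
  "social_welfare q n x y =
     (let S = (SOME S. S \<in> accommodated_sets q n x y)
      in (1 / real n) * (\<Sum>i\<in>S. 1 - \<bar>x i - y\<bar>))"

text \<open>Percentile mechanism: the (floor(p(n-1))+1)-th smallest of x_0..x_{n-1}.\<close>
definition percentile_mech :: "real \<Rightarrow> nat \<Rightarrow> (nat \<Rightarrow> real) \<Rightarrow> real" where
  "percentile_mech p n x = sort (map x [0..<n]) ! nat \<lfloor>p * (real n - 1)\<rfloor>"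

definition expected_SW_PM :: "real measure \<Rightarrow> real \<Rightarrow> real \<Rightarrow> nat \<Rightarrow> real" where
  "expected_SW_PM M q p n =
     (\<integral>x. social_welfare q n x (percentile_mech p n x) \<partial>(PiM {..<n} (\<lambda>_. M)))"

definition PM_optimal :: "real measure \<Rightarrow> real \<Rightarrow> real \<Rightarrow> bool" where
  "PM_optimal M q p \<longleftrightarrow>
     (\<exists>L. (expected_SW_PM M q p \<longlonglongrightarrow> L) \<and>
          L \<in> (\<lambda>y. q - W_cost M q y) ` {0..1} \<and>
          (\<forall>y\<in>{0..1}. q - W_cost M q y \<le> L))"

end

theory Submission
  imports Defs
begin

text \<open>By the bathtub principle the interval \<open>[y - R(y), y + R(y)]\<close> is the cheapest set of mass \<open>q\<close>,
  which makes \<open>W\<close> Lipschitz, so it attains its minimum on \<open>[0, 1]\<close>. At a minimiser \<open>ybar\<close>,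
  first-order optimality balances the mass of its service interval on both sides of \<open>ybar\<close>;
  hence \<open>W\<close> is constant on the level interval \<open>[a, b]\<close> of the cdf \<open>F\<close> through \<open>ybar\<close>.
  By Hoeffding's inequality for finitely many test functions, with probability exponentially
  close to 1 the empirical cdf places the \<open>F(ybar)\<close>-percentile of the sample near \<open>[a, b]\<close>, and
  the empirical welfare is uniformly close to \<open>q - W\<close>. As welfare lies in \<open>[0, 1]\<close>, the
  expected welfare of the mechanism converges to \<open>q - W ybar\<close>.\<close>

lemma nonneg_if_quadratic_perturbation_nonneg:
  fixes c C \<delta> :: real
  assumes "\<delta> > 0" and perturb: "\<And>h. 0 < h \<Longrightarrow> h \<le> \<delta> \<Longrightarrow> 0 \<le> h * c + C * h\<^sup>2"
  shows "0 \<le> c"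
proof (rule ccontr)
  assume "\<not> 0 \<le> c"
  define h where "h = min \<delta> (- c / (2 * (\<bar>C\<bar> + 1)))"
  have "0 < - c / (2 * (\<bar>C\<bar> + 1))" using \<open>\<not> 0 \<le> c\<close> by (intro divide_pos_pos) auto
  then have h: "0 < h" "h \<le> \<delta>" using \<open>\<delta> > 0\<close> by (auto simp: h_def)
  have "h * (\<bar>C\<bar> + 1) \<le> - c / (2 * (\<bar>C\<bar> + 1)) * (\<bar>C\<bar> + 1)"
    by (intro mult_right_mono) (auto simp: h_def)
  also have "- c / (2 * (\<bar>C\<bar> + 1)) * (\<bar>C\<bar> + 1) = - c / 2"
    by (simp add: field_simps add_pos_nonneg)
  finally have h3: "h * (\<bar>C\<bar> + 1) \<le> - c / 2" .
  have "0 \<le> h * (c + C * h)"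
    using perturb[OF h(1,2)] by (simp add: power2_eq_square algebra_simps)
  then have "0 \<le> c + C * h" using h(1) by (simp add: zero_le_mult_iff)
  moreover have "C * h \<le> \<bar>C\<bar> * h" using h(1) by (intro mult_right_mono) auto
  moreover have "\<bar>C\<bar> * h + h \<le> - c / 2" using h3 by (simp add: algebra_simps)
  ultimately show False using h(1) \<open>\<not> 0 \<le> c\<close> by linarith
qed

lemma LIMSEQ_if_exponentially_close:
  fixes s :: "nat \<Rightarrow> real"
  assumes close: "\<And>e. e > 0 \<Longrightarrow>
    \<exists>r>0. \<exists>C n0. \<forall>n\<ge>n0. \<bar>s n - c\<bar> \<le> e + C * exp (- r * real n)"
  shows "s \<longlonglongrightarrow> c"
proof (rule LIMSEQ_I)
  fix e :: real assume "e > 0"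
  then obtain r C n0 where r: "r > 0" and n0: "\<And>n. n \<ge> n0 \<Longrightarrow> \<bar>s n - c\<bar> \<le> e / 2 + C * exp (- r * real n)"
    using close[of "e / 2"] by auto
  have "(\<lambda>n. exp (- r) ^ n) \<longlonglongrightarrow> 0" using r by (intro LIMSEQ_power_zero) simp
  then have "(\<lambda>n. C * exp (- r * real n)) \<longlonglongrightarrow> C * 0"
    by (intro tendsto_mult tendsto_const) (simp add: exp_of_nat_mult[symmetric] mult.commute)
  then obtain n1 where n1: "\<And>n. n \<ge> n1 \<Longrightarrow> C * exp (- r * real n) < e / 2"
    using \<open>e > 0\<close> order_tendstoD(2)[of _ 0 sequentially "e / 2"] by (auto simp: eventually_sequentially)
  show "\<exists>no. \<forall>n\<ge>no. norm (s n - c) < e"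
  proof (intro exI[of _ "max n0 n1"] allI impI)
    fix n assume "max n0 n1 \<le> n"
    then show "norm (s n - c) < e" using n0[of n] n1[of n] by simp
  qed
qed

lemma abs_sum_diff_nested_le:
  fixes h :: "'a \<Rightarrow> real"
  assumes fin: "finite S" "finite T" and nested: "S \<subseteq> T \<or> T \<subseteq> S"
    and h: "\<And>i. i \<in> S \<union> T \<Longrightarrow> \<bar>h i\<bar> \<le> 1"
  shows "\<bar>sum h S - sum h T\<bar> \<le> \<bar>real (card S) - real (card T)\<bar>"
proof -
  have one_side: "\<bar>sum h B - sum h A\<bar> \<le> real (card B) - real (card A)"
    if "A \<subseteq> B" "finite B" "\<And>i. i \<in> B \<Longrightarrow> \<bar>h i\<bar> \<le> 1" for A B
  proof -
    have "\<bar>sum h (B - A)\<bar> \<le> (\<Sum>i\<in>B - A. \<bar>h i\<bar>)" by (rule sum_abs)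
    also have "\<dots> \<le> of_nat (card (B - A)) * 1" using that by (intro sum_bounded_above) auto
    finally show ?thesis
      using that by (simp add: sum.subset_diff[of A B] card_Diff_subset finite_subset card_mono of_nat_diff)
  qed
  from nested show ?thesis
  proof
    assume "S \<subseteq> T"
    then show ?thesis using one_side[of S T] fin h by (simp add: abs_minus_commute)
  next
    assume "T \<subseteq> S"
    then show ?thesis using one_side[of T S] fin h by simp
  qed
qed

section \<open>The percentile mechanism\<close>

lemma sort_nth_le_iff:
  fixes xs :: "'a::linorder list"
  assumes j: "j < length xs"
  shows "sort xs ! j \<le> a \<longleftrightarrow> j < length (filter (\<lambda>v. v \<le> a) xs)"
proof -
  define s where "s = sort xs"
  have sorted: "sorted s" and len: "length s = length xs" by (simp_all add: s_def)
  have "length (filter (\<lambda>v. v \<le> a) xs) = length (filter (\<lambda>v. v \<le> a) s)"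
    unfolding s_def by (metis mset_filter mset_sort size_mset)
  also have "\<dots> = card {i. i < length s \<and> s ! i \<le> a}"
    by (rule length_filter_conv_card)
  finally have count: "length (filter (\<lambda>v. v \<le> a) xs) = card {i. i < length s \<and> s ! i \<le> a}" .
  show ?thesis
  proof
    assume "sort xs ! j \<le> a"
    then have "{..j} \<subseteq> {i. i < length s \<and> s ! i \<le> a}"
      using sorted_nth_mono[OF sorted] j len by (auto simp: s_def intro: order_trans)
    then have "card {..j} \<le> card {i. i < length s \<and> s ! i \<le> a}"
      by (intro card_mono) auto
    then show "j < length (filter (\<lambda>v. v \<le> a) xs)" using count by simp
  next
    assume "j < length (filter (\<lambda>v. v \<le> a) xs)"
    moreover have "{i. i < length s \<and> s ! i \<le> a} \<subseteq> {..<j}" if "a < s ! j"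
      using that sorted_nth_mono[OF sorted, of j] by (force simp: not_less[symmetric])
    then have "a < s ! j \<Longrightarrow> card {i. i < length s \<and> s ! i \<le> a} \<le> j"
      using card_mono[of "{..<j}"] by fastforce
    ultimately show "sort xs ! j \<le> a" using count by (force simp: s_def not_less[symmetric])
  qed
qed

lemma card_in_eq_sum_indicator:
  fixes n :: nat
  shows "real (card {i. i < n \<and> x i \<in> A}) = (\<Sum>i<n. indicator A (x i))"
proof -
  have "(\<Sum>i<n. indicator A (x i) :: real) = (\<Sum>i<n. if x i \<in> A then 1 else 0)"
    by (intro sum.cong) (auto simp: indicator_def)
  also have "\<dots> = (\<Sum>i\<in>{i \<in> {..<n}. x i \<in> A}. 1)"
    by (rule sum.inter_filter[symmetric]) simp
  also have "{i \<in> {..<n}. x i \<in> A} = {i. i < n \<and> x i \<in> A}" by auto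
  finally show ?thesis by simp
qed

lemma percentile_index_less:
  assumes "n > 0" "0 \<le> p" "p \<le> 1"
  shows "nat \<lfloor>p * (real n - 1)\<rfloor> < n"
proof -
  have "p * (real n - 1) \<le> real n - 1" using assms by (intro mult_left_le_one_le) auto
  then have "\<lfloor>p * (real n - 1)\<rfloor> < int n" by linarith
  moreover have "0 \<le> p * (real n - 1)" using assms by simp
  ultimately show ?thesis by (simp add: nat_less_iff)
qed

lemma percentile_mech_in_sample:
  assumes "n > 0" "0 \<le> p" "p \<le> 1"
  shows "percentile_mech p n x \<in> x ` {..<n}"
proof -
  have "percentile_mech p n x \<in> set (sort (map x [0..<n]))"
    unfolding percentile_mech_def using percentile_index_less[OF assms] by (intro nth_mem) simp
  then show ?thesis by auto
qed

lemma percentile_mech_range: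
  assumes "n > 0" "0 \<le> p" "p \<le> 1" and x: "\<And>i. i < n \<Longrightarrow> x i \<in> {0..1}"
  shows "percentile_mech p n x \<in> {0..1}"
  using percentile_mech_in_sample[OF assms(1-3), of x] x by auto

lemma percentile_mech_le_iff:
  assumes n: "n > 0" and p: "0 \<le> p" "p \<le> 1"
  shows "percentile_mech p n x \<le> a \<longleftrightarrow> p * (real n - 1) < real (card {i. i < n \<and> x i \<le> a})"
proof -
  have "length (filter (\<lambda>v. v \<le> a) (map x [0..<n])) = card {i. i < n \<and> map x [0..<n] ! i \<le> a}"
    by (simp add: length_filter_conv_card)
  also have "{i. i < n \<and> map x [0..<n] ! i \<le> a} = {i. i < n \<and> x i \<le> a}" by auto
  finally have count: "length (filter (\<lambda>v. v \<le> a) (map x [0..<n])) = card {i. i < n \<and> x i \<le> a}" .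
  have "nat \<lfloor>p * (real n - 1)\<rfloor> < length (map x [0..<n])"
    using percentile_index_less[OF n p] by simp
  then have "percentile_mech p n x \<le> a \<longleftrightarrow> nat \<lfloor>p * (real n - 1)\<rfloor> < card {i. i < n \<and> x i \<le> a}"
    unfolding percentile_mech_def by (simp only: sort_nth_le_iff count)
  moreover have "0 \<le> p * (real n - 1)" using n p by simp
  ultimately show ?thesis by (simp add: nat_less_iff floor_less_iff)
qed

lemma less_percentile_mech_if_frequency_less:
  assumes n: "n > 0" and p: "0 \<le> p" "p \<le> 1"
    and freq: "(\<Sum>i<n. indicator {..s} (x i)) / real n < p - 1 / real n"
  shows "s < percentile_mech p n x"
proof -
  have "real (card {i. i < n \<and> x i \<le> s}) < p * real n - 1"
    using freq n card_in_eq_sum_indicator[of n x "{..s}"] by (simp add: field_simps)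
  also have "\<dots> \<le> p * (real n - 1)" using p by (simp add: algebra_simps)
  finally show ?thesis using percentile_mech_le_iff[OF n p] by (simp add: not_le[symmetric])
qed

lemma percentile_mech_le_if_frequency_greater:
  assumes n: "n > 0" and p: "0 \<le> p" "p \<le> 1"
    and freq: "p < (\<Sum>i<n. indicator {..s} (x i)) / real n"
  shows "percentile_mech p n x \<le> s"
proof -
  have "p * (real n - 1) \<le> p * real n" using p by (simp add: algebra_simps)
  also have "\<dots> < real (card {i. i < n \<and> x i \<le> s})"
    using freq n card_in_eq_sum_indicator[of n x "{..s}"] by (simp add: field_simps)
  finally show ?thesis using percentile_mech_le_iff[OF n p] by simp
qed

section \<open>Social welfare at a fixed facility\<close>

lemma floor_capacity_le:
  assumes "0 \<le> q" "q \<le> 1"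
  shows "nat \<lfloor>q * real n\<rfloor> \<le> n"
proof -
  have "q * real n \<le> real n" using assms by (simp add: mult_left_le_one_le)
  then show ?thesis by linarith
qed

lemma accommodated_sets_nonempty:
  assumes kn: "nat \<lfloor>q * real n\<rfloor> \<le> n"
  shows "accommodated_sets q n x y \<noteq> {}"
proof -
  define k where "k = nat \<lfloor>q * real n\<rfloor>"
  define Fam where "Fam = {S. S \<subseteq> {..<n} \<and> card S = k}"
  define g where "g S = (\<Sum>i\<in>S. \<bar>x i - y\<bar>)" for S
  have "finite Fam" unfolding Fam_def by (rule finite_subset[of _ "Pow {..<n}"]) auto
  moreover have "Fam \<noteq> {}"
    using obtain_subset_with_card_n[of k "{..<n}"] kn by (auto simp: Fam_def k_def)
  ultimately obtain S0 where S0: "S0 \<in> Fam" and min: "\<And>S. S \<in> Fam \<Longrightarrow> g S0 \<le> g S"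
    using arg_min_if_finite[of Fam g] by (metis arg_min_least)
  have S0n: "S0 \<subseteq> {..<n}" "card S0 = k" "finite S0"
    using S0 by (auto simp: Fam_def intro: finite_subset)
  have "\<bar>x i - y\<bar> \<le> \<bar>x j - y\<bar>" if i: "i \<in> S0" and j: "j \<in> {..<n} - S0" for i j
  proof -
    define S' where "S' = insert j (S0 - {i})"
    have "k > 0" using i S0n by (auto simp: card_gt_0_iff)
    then have "card S' = k" using i j S0n by (simp add: S'_def)
    then have "S' \<in> Fam" using S0n(1) i j by (auto simp: Fam_def S'_def)
    then have "g S0 \<le> g S'" by (rule min)
    also have "g S' = \<bar>x j - y\<bar> + (g S0 - \<bar>x i - y\<bar>)"
      using i j S0n by (simp add: S'_def g_def sum_diff1)
    finally show ?thesis by simp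
  qed
  then have "S0 \<in> accommodated_sets q n x y"
    unfolding accommodated_sets_def using S0n k_def by auto
  then show ?thesis by blast
qed

lemma accommodated_sum_dist_le:
  assumes S: "S \<in> accommodated_sets q n x y" and S': "S' \<subseteq> {..<n}" "card S' = card S"
  shows "(\<Sum>i\<in>S. \<bar>x i - y\<bar>) \<le> (\<Sum>i\<in>S'. \<bar>x i - y\<bar>)"
proof -
  define d where "d i = \<bar>x i - y\<bar>" for i
  have Sn: "S \<subseteq> {..<n}" and closest: "\<And>i j. i \<in> S \<Longrightarrow> j \<in> {..<n} - S \<Longrightarrow> d i \<le> d j"
    using S unfolding accommodated_sets_def d_def by auto
  have fin: "finite S" "finite S'" using Sn S' finite_subset by auto
  have card_eq: "card (S - S') = card (S' - S)"
    using fin S' by (simp add: card_Diff_subset_Int Int_commute)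
  have "sum d (S - S') \<le> sum d (S' - S)"
  proof (cases "S - S' = {}")
    case True
    then have "S' - S = {}" using card_eq fin by (metis card_0_eq card.empty finite_Diff)
    then show ?thesis using True by simp
  next
    case False
    have "Max (d ` (S - S')) \<in> d ` (S - S')" using False fin by (intro Max_in) auto
    then obtain i0 where "i0 \<in> S - S'" "d i0 = Max (d ` (S - S'))" by auto
    then have i0: "i0 \<in> S - S'" "\<And>i. i \<in> S - S' \<Longrightarrow> d i \<le> d i0" using fin by auto
    have "sum d (S - S') \<le> of_nat (card (S - S')) * d i0"
      by (rule sum_bounded_above) (use i0 in auto)
    also have "\<dots> \<le> sum d (S' - S)"
      unfolding card_eq by (rule sum_bounded_below) (use i0 closest S' in auto)
    finally show ?thesis .
  qed
  moreover have "sum d S = sum d (S \<inter> S') + sum d (S - S')" using fin(1) by (rule sum.Int_Diff)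
  moreover have "sum d S' = sum d (S' \<inter> S) + sum d (S' - S)" using fin(2) by (rule sum.Int_Diff)
  ultimately show ?thesis unfolding d_def by (simp add: Int_commute)
qed

text \<open>All accommodated sets have the same total distance to \<open>y\<close>, so the welfare does not
  depend on how \<open>SOME\<close> breaks ties.\<close>
lemma social_welfare_eq:
  assumes S: "S \<in> accommodated_sets q n x y"
  shows "social_welfare q n x y = (\<Sum>i\<in>S. 1 - \<bar>x i - y\<bar>) / real n"
proof -
  define S0 where "S0 = (SOME S. S \<in> accommodated_sets q n x y)"
  have S0: "S0 \<in> accommodated_sets q n x y" unfolding S0_def using S by (rule someI)
  have card: "card S0 = card S" and sub: "S0 \<subseteq> {..<n}" "S \<subseteq> {..<n}"
    using S S0 by (auto simp: accommodated_sets_def)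
  have "(\<Sum>i\<in>S0. \<bar>x i - y\<bar>) = (\<Sum>i\<in>S. \<bar>x i - y\<bar>)"
    using accommodated_sum_dist_le[OF S0 sub(2)] accommodated_sum_dist_le[OF S sub(1)] card by simp
  moreover have "finite S0" "finite S" using sub finite_subset by auto
  ultimately have "(\<Sum>i\<in>S0. 1 - \<bar>x i - y\<bar>) = (\<Sum>i\<in>S. 1 - \<bar>x i - y\<bar>)"
    using card by (simp add: sum_subtractf)
  then show ?thesis by (simp add: social_welfare_def S0_def[symmetric])
qed

lemma social_welfare_eq_Min:
  assumes kn: "nat \<lfloor>q * real n\<rfloor> \<le> n"
  defines "Fam \<equiv> {S. S \<subseteq> {..<n} \<and> card S = nat \<lfloor>q * real n\<rfloor>}"
  shows "social_welfare q n x y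
           = (real (nat \<lfloor>q * real n\<rfloor>) - Min ((\<lambda>S. \<Sum>i\<in>S. \<bar>x i - y\<bar>) ` Fam)) / real n"
proof -
  obtain S where S: "S \<in> accommodated_sets q n x y"
    using accommodated_sets_nonempty[OF kn] by blast
  have Sn: "S \<subseteq> {..<n}" "card S = nat \<lfloor>q * real n\<rfloor>" "finite S"
    using S by (auto simp: accommodated_sets_def intro: finite_subset)
  have "finite Fam" unfolding Fam_def by (rule finite_subset[of _ "Pow {..<n}"]) auto
  then have "Min ((\<lambda>S. \<Sum>i\<in>S. \<bar>x i - y\<bar>) ` Fam) = (\<Sum>i\<in>S. \<bar>x i - y\<bar>)"
    by (intro Min_eqI) (use Sn accommodated_sum_dist_le[OF S] in \<open>auto simp: Fam_def\<close>)
  then show ?thesis using Sn by (simp add: social_welfare_eq[OF S] sum_subtractf)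
qed

lemma social_welfare_lipschitz:
  assumes kn: "nat \<lfloor>q * real n\<rfloor> \<le> n"
  shows "\<bar>social_welfare q n x y' - social_welfare q n x y\<bar> \<le> \<bar>y - y'\<bar>"
proof -
  have one_side: "social_welfare q n x v - social_welfare q n x u \<le> \<bar>u - v\<bar>" for u v
  proof -
    obtain S where S: "S \<in> accommodated_sets q n x u"
      using accommodated_sets_nonempty[OF kn] by blast
    obtain S' where S': "S' \<in> accommodated_sets q n x v"
      using accommodated_sets_nonempty[OF kn] by blast
    define k where "k = nat \<lfloor>q * real n\<rfloor>"
    have Sn: "S \<subseteq> {..<n}" "card S = k" "S' \<subseteq> {..<n}" "card S' = k" "finite S" "finite S'"
      using S S' by (auto simp: accommodated_sets_def k_def intro: finite_subset)
    have "(\<Sum>i\<in>S. \<bar>x i - u\<bar>) \<le> (\<Sum>i\<in>S'. \<bar>x i - u\<bar>)"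
      by (rule accommodated_sum_dist_le[OF S]) (use Sn in auto)
    also have "\<dots> \<le> (\<Sum>i\<in>S'. \<bar>x i - v\<bar> + \<bar>u - v\<bar>)" by (intro sum_mono) auto
    finally have "(\<Sum>i\<in>S'. 1 - \<bar>x i - v\<bar>) - (\<Sum>i\<in>S. 1 - \<bar>x i - u\<bar>) \<le> k * \<bar>u - v\<bar>"
      using Sn by (simp add: sum_subtractf sum.distrib)
    also have "\<dots> \<le> n * \<bar>u - v\<bar>" using kn by (intro mult_right_mono) (auto simp: k_def)
    finally show ?thesis
      unfolding social_welfare_eq[OF S] social_welfare_eq[OF S']
      by (cases "n = 0") (simp_all add: field_simps)
  qed
  show ?thesis using one_side[of y y'] one_side[of y' y] by (simp add: abs_minus_commute)
qed

lemma social_welfare_bounds: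
  assumes q: "0 \<le> q" "q \<le> 1" and x: "\<And>i. i < n \<Longrightarrow> x i \<in> {0..1}" and y: "y \<in> {0..1}"
  shows "0 \<le> social_welfare q n x y" "social_welfare q n x y \<le> 1"
proof -
  have kn: "nat \<lfloor>q * real n\<rfloor> \<le> n" using q by (rule floor_capacity_le)
  obtain S where S: "S \<in> accommodated_sets q n x y"
    using accommodated_sets_nonempty[OF kn] by blast
  have Sn: "S \<subseteq> {..<n}" "card S \<le> n" using S kn by (auto simp: accommodated_sets_def)
  have summand: "0 \<le> 1 - \<bar>x i - y\<bar>" "1 - \<bar>x i - y\<bar> \<le> 1" if "i \<in> S" for i
  proof -
    have "i < n" using Sn that by auto
    then show "0 \<le> 1 - \<bar>x i - y\<bar>" "1 - \<bar>x i - y\<bar> \<le> 1" using x y by fastforce+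
  qed
  have "0 \<le> (\<Sum>i\<in>S. 1 - \<bar>x i - y\<bar>)" using summand by (intro sum_nonneg) auto
  then show "0 \<le> social_welfare q n x y" by (simp add: social_welfare_eq[OF S])
  have "(\<Sum>i\<in>S. 1 - \<bar>x i - y\<bar>) \<le> of_nat (card S) * 1" using summand by (intro sum_bounded_above) auto
  then show "social_welfare q n x y \<le> 1"
    unfolding social_welfare_eq[OF S] using Sn by (cases "n = 0") (auto simp: field_simps)
qed

lemma social_welfare_percentile_mech_bounds:
  assumes q: "0 \<le> q" "q \<le> 1" and n: "n > 0" and p: "0 \<le> p" "p \<le> 1"
    and x: "\<And>i. i < n \<Longrightarrow> x i \<in> {0..1}"
  shows "social_welfare q n x (percentile_mech p n x) \<in> {0..1}"
proof -
  have "percentile_mech p n x \<in> {0..1}" using n p x by (rule percentile_mech_range)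
  then show ?thesis using social_welfare_bounds[OF q x] by simp
qed

text \<open>The accommodated set \<open>S\<close> and the set \<open>T\<close> of agents within distance \<open>r\<close> of \<open>y\<close> are
  nested, so the sums of \<open>r - \<bar>x i - y\<bar>\<close> over them differ by at most \<open>\<bar>card T - card S\<bar>\<close>.\<close>
lemma social_welfare_tent_estimate:
  assumes q: "0 \<le> q" "q \<le> 1" and n: "n > 0" and x: "\<And>i. i < n \<Longrightarrow> x i \<in> {0..1}"
    and y: "y \<in> {0..1}" and r: "0 \<le> r" "r \<le> 1"
  shows "\<bar>real n * social_welfare q n x y -
           (real (nat \<lfloor>q * real n\<rfloor>) * (1 - r) + (\<Sum>i<n. max 0 (r - \<bar>x i - y\<bar>)))\<bar>
         \<le> \<bar>real (card {i. i < n \<and> \<bar>x i - y\<bar> \<le> r}) - real (nat \<lfloor>q * real n\<rfloor>)\<bar>"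
proof -
  have kn: "nat \<lfloor>q * real n\<rfloor> \<le> n" using q by (rule floor_capacity_le)
  obtain S where S: "S \<in> accommodated_sets q n x y"
    using accommodated_sets_nonempty[OF kn] by blast
  define k where "k = nat \<lfloor>q * real n\<rfloor>"
  define d where "d i = \<bar>x i - y\<bar>" for i
  define T where "T = {i. i < n \<and> d i \<le> r}"
  have Sn: "S \<subseteq> {..<n}" "card S = k" "finite S"
    and closest: "\<And>i j. i \<in> S \<Longrightarrow> j \<in> {..<n} - S \<Longrightarrow> d i \<le> d j"
    using S by (auto simp: accommodated_sets_def k_def d_def intro: finite_subset)
  have "real n * social_welfare q n x y = (\<Sum>i\<in>S. (1 - r) + (r - d i))"
    using n by (simp add: social_welfare_eq[OF S] d_def)
  also have "\<dots> = (\<Sum>i\<in>S. 1 - r) + (\<Sum>i\<in>S. r - d i)" by (rule sum.distrib)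
  also have "(\<Sum>i\<in>S. 1 - r) = k * (1 - r)" using Sn by simp
  finally have SW: "real n * social_welfare q n x y = k * (1 - r) + (\<Sum>i\<in>S. r - d i)" .
  have "(\<Sum>i<n. max 0 (r - d i)) = (\<Sum>i<n. if d i \<le> r then r - d i else 0)"
    by (intro sum.cong) auto
  also have "\<dots> = (\<Sum>i\<in>T. r - d i)"
    unfolding T_def by (subst sum.inter_filter[symmetric]) (auto intro: sum.cong)
  finally have tent: "(\<Sum>i<n. max 0 (r - d i)) = (\<Sum>i\<in>T. r - d i)" .
  have "S \<subseteq> T \<or> T \<subseteq> S"
  proof (rule disjCI)
    assume "\<not> T \<subseteq> S"
    then obtain j where j: "j \<in> T" "j \<notin> S" by auto
    then show "S \<subseteq> T" using closest[of _ j] Sn by (force simp: T_def)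
  qed
  moreover have "\<bar>r - d i\<bar> \<le> 1" if "i \<in> S \<union> T" for i
  proof -
    have "i < n" using that Sn(1) by (auto simp: T_def)
    then show ?thesis using x[of i] y r by (auto simp: d_def)
  qed
  ultimately have "\<bar>(\<Sum>i\<in>S. r - d i) - (\<Sum>i\<in>T. r - d i)\<bar> \<le> \<bar>real k - real (card T)\<bar>"
    using abs_sum_diff_nested_le[of S T "\<lambda>i. r - d i"] Sn by (simp add: T_def)
  then show ?thesis
    using SW tent unfolding T_def k_def d_def by (simp add: abs_minus_commute)
qed

section \<open>I.i.d. samples\<close>

lemma indep_vars_PiM_coordinates:
  assumes M: "prob_space M" and I: "I \<noteq> {}"
  shows "prob_space.indep_vars (PiM I (\<lambda>_. M)) (\<lambda>_. M) (\<lambda>i \<omega>. \<omega> i) I"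
proof -
  interpret P: prob_space "PiM I (\<lambda>_. M)" by (rule prob_space_PiM) (rule M)
  show ?thesis
  proof (subst P.indep_vars_iff_distr_eq_PiM'[OF I])
    show "(\<lambda>\<omega>. \<omega> i) \<in> measurable (PiM I (\<lambda>_. M)) M" if "i \<in> I" for i
      using that by (intro measurable_component_singleton)
    have "distr (PiM I (\<lambda>_. M)) (PiM I (\<lambda>_. M)) (\<lambda>x. \<lambda>i\<in>I. x i)
        = distr (PiM I (\<lambda>_. M)) (PiM I (\<lambda>_. M)) (\<lambda>x. x)"
      by (rule distr_cong) (auto simp: space_PiM PiE_def extensional_def restrict_def fun_eq_iff)
    also have "\<dots> = PiM I (\<lambda>i. distr (PiM I (\<lambda>_. M)) M (\<lambda>\<omega>. \<omega> i))"
      by (auto intro!: PiM_cong distr_PiM_component[symmetric] M)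
    finally show "distr (PiM I (\<lambda>_. M)) (PiM I (\<lambda>_. M)) (\<lambda>x. \<lambda>i\<in>I. x i)
        = PiM I (\<lambda>i. distr (PiM I (\<lambda>_. M)) M (\<lambda>\<omega>. \<omega> i))" .
  qed
qed

lemma distr_PiM_coordinate_compose:
  assumes M: "prob_space M" and g: "g \<in> borel_measurable M" and i: "i \<in> I"
  shows "distr (PiM I (\<lambda>_. M)) borel (\<lambda>\<omega>. g (\<omega> i)) = distr M borel g"
proof -
  have "distr (PiM I (\<lambda>_. M)) borel (\<lambda>\<omega>. g (\<omega> i))
      = distr (distr (PiM I (\<lambda>_. M)) M (\<lambda>\<omega>. \<omega> i)) borel g"
    using g i by (subst distr_distr) (auto simp: comp_def intro!: measurable_component_singleton)
  also have "distr (PiM I (\<lambda>_. M)) M (\<lambda>\<omega>. \<omega> i) = M"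
    using i by (intro distr_PiM_component M)
  finally show ?thesis .
qed

lemma empirical_mean_deviation_prob:
  assumes M: "prob_space M" and g: "g \<in> borel_measurable M" and g01: "AE x in M. g x \<in> {0..1}"
    and n: "n > 0" and \<epsilon>: "0 \<le> \<epsilon>"
  defines "P \<equiv> PiM {..<n} (\<lambda>_. M)"
  shows "measure P {\<omega> \<in> space P. \<epsilon> \<le> \<bar>(\<Sum>i<n. g (\<omega> i)) / real n - (\<integral>x. g x \<partial>M)\<bar>}
           \<le> 2 * exp (- 2 * real n * \<epsilon>\<^sup>2)"
proof -
  interpret P: prob_space P unfolding P_def by (rule prob_space_PiM) (rule M)
  have i0: "0 \<in> {..<n}" using n by simp
  have g0: "(\<lambda>\<omega>. g (\<omega> 0)) \<in> borel_measurable P"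
    unfolding P_def using g i0 by (intro measurable_compose[OF measurable_component_singleton])
  have distr: "distr P borel (\<lambda>\<omega>. g (\<omega> i)) = distr M borel g" if "i \<in> {..<n}" for i
    unfolding P_def using M g that by (rule distr_PiM_coordinate_compose)
  have "P.expectation (\<lambda>\<omega>. g (\<omega> 0)) = (\<integral>x. x \<partial>distr P borel (\<lambda>\<omega>. g (\<omega> 0)))"
    using g0 by (simp add: integral_distr)
  also have "\<dots> = (\<integral>x. g x \<partial>M)" using g by (simp add: distr[OF i0] integral_distr)
  finally have E: "P.expectation (\<lambda>\<omega>. g (\<omega> 0)) = (\<integral>x. g x \<partial>M)" .
  interpret H: Hoeffding_ineq_iid P "{..<n}" "\<lambda>i \<omega>. g (\<omega> i)" "\<lambda>\<omega>. g (\<omega> 0)" 0 1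
    "P.expectation (\<lambda>\<omega>. g (\<omega> 0))"
  proof unfold_locales
    have "P.indep_vars (\<lambda>_. M) (\<lambda>i \<omega>. \<omega> i) {..<n}"
      using indep_vars_PiM_coordinates[OF M, of "{..<n}"] n unfolding P_def by blast
    then show "P.indep_vars (\<lambda>_. borel) (\<lambda>i \<omega>. g (\<omega> i)) {..<n}"
      using g by (rule P.indep_vars_compose2)
    show "distr P borel (\<lambda>\<omega>. g (\<omega> i)) = distr P borel (\<lambda>\<omega>. g (\<omega> 0))" if "i \<in> {..<n}" for i
      using distr[OF that] distr[OF i0] by simp
    show "AE \<omega> in P. g (\<omega> 0) \<in> {0..1}"
      unfolding P_def using M i0 g01 by (rule AE_PiM_component)
  qed (simp_all add: g0)
  have "measure P {\<omega> \<in> space P. \<epsilon> \<le> \<bar>(\<Sum>i\<in>{..<n}. g (\<omega> i)) / real (card {..<n})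
            - P.expectation (\<lambda>\<omega>. g (\<omega> 0))\<bar>}
        \<le> 2 * exp (- 2 * real (card {..<n}) * \<epsilon>\<^sup>2 / (1 - 0)\<^sup>2)"
    by (rule H.Hoeffding_ineq_abs_ge'[OF \<epsilon>]) (use n in auto)
  then show ?thesis unfolding E by simp
qed

lemma empirical_means_deviation_prob:
  assumes M: "prob_space M" and G: "finite G"
    and meas: "\<And>g. g \<in> G \<Longrightarrow> g \<in> borel_measurable M"
    and range: "\<And>g. g \<in> G \<Longrightarrow> AE x in M. g x \<in> {0..1}"
    and n: "n > 0" and \<epsilon>: "0 \<le> \<epsilon>"
  defines "P \<equiv> PiM {..<n} (\<lambda>_. M)"
    and "B \<equiv> {\<omega> \<in> space (PiM {..<n} (\<lambda>_. M)). \<exists>g\<in>G. \<epsilon> \<le> \<bar>(\<Sum>i<n. g (\<omega> i)) / real n - (\<integral>x. g x \<partial>M)\<bar>}"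
  shows "B \<in> sets P" and "measure P B \<le> 2 * real (card G) * exp (- 2 * real n * \<epsilon>\<^sup>2)"
proof -
  interpret P: prob_space P unfolding P_def by (rule prob_space_PiM) (rule M)
  define E where "E g = {\<omega> \<in> space P. \<epsilon> \<le> \<bar>(\<Sum>i<n. g (\<omega> i)) / real n - (\<integral>x. g x \<partial>M)\<bar>}" for g
  have B: "B = (\<Union>g\<in>G. E g)" by (auto simp: B_def E_def P_def)
  have E: "E g \<in> P.events" if "g \<in> G" for g
  proof -
    have [measurable]: "(\<lambda>\<omega>. g (\<omega> i)) \<in> borel_measurable P" if "i \<in> {..<n}" for i
      unfolding P_def using meas[OF \<open>g \<in> G\<close>] that
      by (intro measurable_compose[OF measurable_component_singleton])
    show ?thesis unfolding E_def by measurable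
  qed
  then show "B \<in> sets P" unfolding B using G by blast
  have "measure P (\<Union>g\<in>G. E g) \<le> (\<Sum>g\<in>G. measure P (E g))"
    using E G by (intro P.finite_measure_subadditive_finite) auto
  also have "\<dots> \<le> (\<Sum>g\<in>G. 2 * exp (- 2 * real n * \<epsilon>\<^sup>2))"
    unfolding E_def P_def
    by (intro sum_mono empirical_mean_deviation_prob[OF M meas range n \<epsilon>])
  finally show "measure P B \<le> 2 * real (card G) * exp (- 2 * real n * \<epsilon>\<^sup>2)"
    unfolding B by simp
qed

lemma (in prob_space) abs_expectation_diff_le:
  assumes Z: "integrable M Z" and B: "B \<in> events"
    and close: "AE \<omega> in M. \<bar>Z \<omega> - c\<bar> \<le> \<epsilon> + C * indicator B \<omega>"
  shows "\<bar>expectation Z - c\<bar> \<le> \<epsilon> + C * prob B"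
proof -
  have "\<bar>expectation Z - c\<bar> = \<bar>\<integral>\<omega>. Z \<omega> - c \<partial>M\<bar>" using Z by (simp add: prob_space)
  also have "\<dots> \<le> (\<integral>\<omega>. \<bar>Z \<omega> - c\<bar> \<partial>M)" by (rule integral_abs_bound)
  also have "\<dots> \<le> (\<integral>\<omega>. \<epsilon> + C * indicator B \<omega> \<partial>M)"
    using Z B close by (intro integral_mono_AE) (auto simp: emeasure_eq_measure)
  also have "\<dots> = \<epsilon> + C * prob B" using B by (simp add: prob_space emeasure_eq_measure)
  finally show ?thesis .
qed

lemma measurable_PiM_coordinate_borel:
  assumes "sets M = sets borel" and "i \<in> I"
  shows "(\<lambda>\<omega>. \<omega> i) \<in> borel_measurable (PiM I (\<lambda>_. M))"
  using measurable_component_singleton[OF assms(2), of "\<lambda>_. M"]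
  by (simp add: measurable_cong_sets[OF refl assms(1)])

lemma measurable_percentile_mech:
  assumes M: "sets M = sets borel" and p: "0 \<le> p" "p \<le> 1"
  shows "percentile_mech p n \<in> borel_measurable (PiM {..<n} (\<lambda>_. M))"
proof (cases "n = 0")
  case True
  then have "percentile_mech p n = (\<lambda>\<omega>. [] ! nat \<lfloor>- p\<rfloor>)"
    by (simp add: percentile_mech_def fun_eq_iff)
  then show ?thesis by simp
next
  case False
  show ?thesis
  proof (subst borel_measurable_iff_le, intro allI)
    fix a
    have [measurable]: "(\<lambda>\<omega>. \<omega> i) \<in> borel_measurable (PiM {..<n} (\<lambda>_. M))" if "i \<in> {..<n}" for i
      using M that by (rule measurable_PiM_coordinate_borel)
    have "{\<omega> \<in> space (PiM {..<n} (\<lambda>_. M)). percentile_mech p n \<omega> \<le> a}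
        = {\<omega> \<in> space (PiM {..<n} (\<lambda>_. M)). p * (real n - 1) < (\<Sum>i<n. indicator {..a} (\<omega> i))}"
      using percentile_mech_le_iff[of n p] False p card_in_eq_sum_indicator[of n _ "{..a}"] by auto
    also have "\<dots> \<in> sets (PiM {..<n} (\<lambda>_. M))" by measurable
    finally show "{\<omega> \<in> space (PiM {..<n} (\<lambda>_. M)). percentile_mech p n \<omega> \<le> a}
        \<in> sets (PiM {..<n} (\<lambda>_. M))" .
  qed
qed

lemma measurable_social_welfare_percentile_mech:
  assumes M: "sets M = sets borel" and p: "0 \<le> p" "p \<le> 1" and q: "0 \<le> q" "q \<le> 1"
  shows "(\<lambda>\<omega>. social_welfare q n \<omega> (percentile_mech p n \<omega>)) \<in> borel_measurable (PiM {..<n} (\<lambda>_. M))"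
proof -
  define Fam where "Fam = {S. S \<subseteq> {..<n} \<and> card S = nat \<lfloor>q * real n\<rfloor>}"
  have "finite Fam" unfolding Fam_def by (rule finite_subset[of _ "Pow {..<n}"]) auto
  have [measurable]: "percentile_mech p n \<in> borel_measurable (PiM {..<n} (\<lambda>_. M))"
    using M p by (rule measurable_percentile_mech)
  have "(\<lambda>\<omega>. \<Sum>i\<in>S. \<bar>\<omega> i - percentile_mech p n \<omega>\<bar>) \<in> borel_measurable (PiM {..<n} (\<lambda>_. M))"
    if "S \<in> Fam" for S
  proof (rule borel_measurable_sum)
    fix i assume "i \<in> S"
    then have [measurable]: "(\<lambda>\<omega>. \<omega> i) \<in> borel_measurable (PiM {..<n} (\<lambda>_. M))"
      using M that by (intro measurable_PiM_coordinate_borel) (auto simp: Fam_def)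
    show "(\<lambda>\<omega>. \<bar>\<omega> i - percentile_mech p n \<omega>\<bar>) \<in> borel_measurable (PiM {..<n} (\<lambda>_. M))"
      by measurable
  qed
  then have [measurable]: "(\<lambda>\<omega>. Min ((\<lambda>S. \<Sum>i\<in>S. \<bar>\<omega> i - percentile_mech p n \<omega>\<bar>) ` Fam))
      \<in> borel_measurable (PiM {..<n} (\<lambda>_. M))"
    by (rule borel_measurable_Min[OF \<open>finite Fam\<close>])
  show ?thesis
    by (subst social_welfare_eq_Min[OF floor_capacity_le[OF q]]) (simp add: Fam_def[symmetric])
qed

section \<open>Laws with a continuous density on the unit interval\<close>

locale continuous_density =
  fixes f :: "real \<Rightarrow> real"
  assumes f_cont: "continuous_on {0..1} f"
    and prob: "prob_space (mu_of f)"
begin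

abbreviation "\<mu> \<equiv> mu_of f"
abbreviation "F \<equiv> cdf_of \<mu>"

sublocale mu: prob_space \<mu> by (rule prob)

lemma sets_mu [simp, measurable_cong]: "sets \<mu> = sets borel"
  by (simp add: mu_of_def)

lemma space_mu [simp]: "space \<mu> = UNIV"
  by (simp add: mu_of_def)

lemma borel_measurable_mu_iff [simp]: "g \<in> borel_measurable \<mu> \<longleftrightarrow> g \<in> borel_measurable borel"
  unfolding measurable_cong_sets[OF sets_mu refl] ..

lemma density_measurable: "(\<lambda>x. ennreal (f x) * indicator {0..1} x) \<in> borel_measurable borel"
proof -
  have "(\<lambda>x. indicator {0..1} x *\<^sub>R f x) \<in> borel_measurable borel"
    by (intro borel_measurable_continuous_on_indicator f_cont) auto
  then have "(\<lambda>x. ennreal (indicator {0..1} x *\<^sub>R f x)) \<in> borel_measurable borel" by measurable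
  also have "(\<lambda>x. ennreal (indicator {0..1} x *\<^sub>R f x)) = (\<lambda>x. ennreal (f x) * indicator {0..1} x)"
    by (auto simp: indicator_def fun_eq_iff)
  finally show ?thesis .
qed

definition density_bound :: real where
  "density_bound = (SOME K. K > 0 \<and> (\<forall>x\<in>{0..1}. f x \<le> K))"

lemma density_bound: "density_bound > 0" "\<And>x. x \<in> {0..1} \<Longrightarrow> f x \<le> density_bound"
proof -
  have "bounded (f ` {0..1})"
    by (intro compact_imp_bounded compact_continuous_image f_cont) auto
  then obtain B where "\<forall>x\<in>{0..1}. \<bar>f x\<bar> \<le> B" by (auto simp: bounded_real)
  then have "\<exists>K. K > 0 \<and> (\<forall>x\<in>{0..1}. f x \<le> K)" by (intro exI[of _ "\<bar>B\<bar> + 1"]) force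
  from someI_ex[OF this] show "density_bound > 0" "\<And>x. x \<in> {0..1} \<Longrightarrow> f x \<le> density_bound"
    unfolding density_bound_def by auto
qed

lemma measure_Icc_le:
  assumes "a \<le> b"
  shows "measure \<mu> {a..b} \<le> density_bound * (b - a)"
proof -
  have "emeasure \<mu> {a..b} = (\<integral>\<^sup>+ x. ennreal (f x) * indicator {0..1} x * indicator {a..b} x \<partial>lborel)"
    unfolding mu_of_def using density_measurable
    by (subst emeasure_density) (auto intro!: nn_integral_cong simp: mult.commute)
  also have "\<dots> \<le> (\<integral>\<^sup>+ x. ennreal density_bound * indicator {a..b} x \<partial>lborel)"
    using density_bound by (intro nn_integral_mono) (auto simp: indicator_def)
  also have "\<dots> = ennreal (density_bound * (b - a))"
    using assms density_bound by (simp add: nn_integral_cmult ennreal_mult)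
  finally show ?thesis
    using assms density_bound by (simp add: mu.emeasure_eq_measure ennreal_le_iff)
qed

lemma measure_singleton: "measure \<mu> {c} = 0"
  using measure_Icc_le[of c c] by (simp add: measure_nonneg antisym)

lemma AE_unit_interval: "AE x in \<mu>. x \<in> {0..1}"
  unfolding mu_of_def using density_measurable
  by (subst AE_density) (auto simp: indicator_def)

lemma measure_inter_unit_interval: "A \<in> sets borel \<Longrightarrow> measure \<mu> A = measure \<mu> (A \<inter> {0..1})"
  by (rule measure_eq_AE) (use AE_unit_interval in auto)

lemma measure_unit_interval: "measure \<mu> {0..1} = 1"
  using mu.prob_space measure_inter_unit_interval[of UNIV] by simp

lemma integrable_if_bounded_on_unit_interval:
  fixes B :: real
  assumes "h \<in> borel_measurable borel" and "\<And>x. x \<in> {0..1} \<Longrightarrow> \<bar>h x\<bar> \<le> B"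
  shows "integrable \<mu> h"
  by (rule mu.integrable_const_bound[of _ B])
     (use AE_unit_interval assms in \<open>auto elim: eventually_mono\<close>)

lemma cdf_eq: "F t = measure \<mu> {..t}"
  by (simp add: cdf_of_def)

lemma cdf_bounds: "0 \<le> F t" "F t \<le> 1"
  by (simp_all add: cdf_eq)

lemma cdf_mono: "s \<le> t \<Longrightarrow> F s \<le> F t"
  unfolding cdf_eq by (intro mu.finite_measure_mono) auto

lemma measure_Icc_cdf:
  assumes "s \<le> t"
  shows "measure \<mu> {s..t} = F t - F s"
proof -
  have "{..t} = {..<s} \<union> {s..t}" "{..s} = {..<s} \<union> {s}" using assms by auto
  moreover have "measure \<mu> ({..<s} \<union> {s..t}) = measure \<mu> {..<s} + measure \<mu> {s..t}"
    by (rule mu.finite_measure_Union) auto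
  moreover have "measure \<mu> ({..<s} \<union> {s}) = measure \<mu> {..<s} + measure \<mu> {s}"
    by (rule mu.finite_measure_Union) auto
  ultimately have "F t = measure \<mu> {..<s} + measure \<mu> {s..t}" "F s = measure \<mu> {..<s} + measure \<mu> {s}"
    by (simp_all only: cdf_eq)
  then show ?thesis by (simp add: measure_singleton)
qed

lemma cdf_continuous: "continuous_on A F"
proof -
  have "\<bar>F t - F s\<bar> \<le> density_bound * \<bar>t - s\<bar>" for s t
    using measure_Icc_le[of s t] measure_Icc_le[of t s] measure_Icc_cdf[of s t] measure_Icc_cdf[of t s]
      cdf_mono[of s t] cdf_mono[of t s]
    by (cases "s \<le> t") (auto simp: abs_if)
  then have "density_bound-lipschitz_on A F"
    by (intro lipschitz_onI) (use density_bound in \<open>auto simp: dist_real_def\<close>)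
  then show ?thesis by (rule lipschitz_on_continuous_on)
qed

end

section \<open>The cost function\<close>

locale facility_problem = continuous_density +
  fixes q :: real
  assumes q_pos: "0 < q" and q_less_1: "q < 1"
begin

abbreviation "rad \<equiv> radius \<mu> q"
abbreviation "W \<equiv> W_cost \<mu> q"

lemma radius_props:
  assumes y: "y \<in> {0..1}"
  shows "0 \<le> rad y" "rad y \<le> 1" "measure \<mu> {y - rad y..y + rad y} = q"
proof -
  define m where "m r = F (y + r) - F (y - r)" for r
  have mass: "measure \<mu> {y - r..y + r} = m r" if "0 \<le> r" for r
    using that measure_Icc_cdf[of "y - r" "y + r"] by (simp add: m_def)
  have cont: "continuous_on A m" for A
    unfolding m_def
    by (intro continuous_on_diff continuous_on_compose2[OF cdf_continuous[of UNIV]] continuous_intros) auto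
  have "m 0 = 0" using mass[of 0] by (simp add: measure_singleton)
  moreover have "m 1 = 1"
  proof -
    have "{y - 1..y + 1} \<inter> {0..1} = {0..1::real}" using y by auto
    then show ?thesis using mass[of 1] measure_inter_unit_interval[of "{y - 1..y + 1}"]
      by (simp add: measure_unit_interval)
  qed
  ultimately obtain r0 where r0: "0 \<le> r0" "r0 \<le> 1" "m r0 = q"
    using IVT'[of m 0 q 1] cont q_pos q_less_1 by force
  define R where "R = {r \<in> {0..}. m r = q}"
  have R_eq: "{r. r \<ge> 0 \<and> measure \<mu> {y - r..y + r} = q} = R"
    unfolding R_def using mass by auto
  have "bdd_below R" unfolding R_def by (auto intro: bdd_belowI[of _ 0])
  moreover have "closed R" unfolding R_def
    by (intro continuous_closed_preimage_constant cont) (simp add: closed_atLeast)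
  moreover have "R \<noteq> {}" using r0 unfolding R_def by auto
  ultimately have "Inf R \<in> R" by (intro closed_contains_Inf)
  moreover have "Inf R \<le> r0" using r0 \<open>bdd_below R\<close> unfolding R_def by (intro cInf_lower) auto
  moreover have "rad y = Inf R" unfolding radius_def R_eq ..
  ultimately show "0 \<le> rad y" "rad y \<le> 1" "measure \<mu> {y - rad y..y + rad y} = q"
    using r0 mass unfolding R_def by auto
qed

definition service_interval :: "real \<Rightarrow> real set" where
  "service_interval y = {y - rad y..y + rad y}"

definition cost_on :: "real set \<Rightarrow> real \<Rightarrow> real" where
  "cost_on A t = (\<integral>x. indicator A x * \<bar>x - t\<bar> \<partial>\<mu>)"

lemma service_interval_borel [measurable]: "service_interval y \<in> sets borel"
  by (simp add: service_interval_def)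

lemma measure_service_interval: "y \<in> {0..1} \<Longrightarrow> measure \<mu> (service_interval y) = q"
  using radius_props by (simp add: service_interval_def)

lemma W_eq_cost_on: "W y = cost_on (service_interval y) y"
  by (simp add: W_cost_def cost_on_def service_interval_def set_lebesgue_integral_def)

lemma integrable_indicator_dist:
  assumes [measurable]: "A \<in> sets borel"
  shows "integrable \<mu> (\<lambda>x. indicator A x * \<bar>x - t\<bar>)"
  by (rule integrable_if_bounded_on_unit_interval[of _ "1 + \<bar>t\<bar>"]) (auto simp: indicator_def)

lemma integrable_indicator:
  assumes [measurable]: "A \<in> sets borel"
  shows "integrable \<mu> (indicator A :: real \<Rightarrow> real)"
  by (rule integrable_if_bounded_on_unit_interval[of _ 1]) (auto simp: indicator_def)

text \<open>Bathtub principle: with \<open>B\<close> the service interval of \<open>y\<close>, the integrand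
  \<open>(1\<^sub>A - 1\<^sub>B) (\<bar>x - y\<bar> - rad y)\<close> is nonnegative and integrates to \<open>cost_on A y - W y\<close>.\<close>
lemma W_le_cost_on:
  assumes y: "y \<in> {0..1}" and A [measurable]: "A \<in> sets borel" "measure \<mu> A = q"
  shows "W y \<le> cost_on A y"
proof -
  define B where "B = service_interval y"
  have "0 \<le> (\<integral>x. (indicator A x - indicator B x) * (\<bar>x - y\<bar> - rad y) \<partial>\<mu>)"
    by (intro Bochner_Integration.integral_nonneg) (auto simp: indicator_def B_def service_interval_def)
  also have "\<dots> = (\<integral>x. (indicator A x * \<bar>x - y\<bar> - indicator B x * \<bar>x - y\<bar>)
                      + (rad y * indicator B x - rad y * indicator A x) \<partial>\<mu>)"
    by (rule Bochner_Integration.integral_cong) (auto simp: algebra_simps)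
  also have "\<dots> = (cost_on A y - cost_on B y) + (rad y * measure \<mu> B - rad y * measure \<mu> A)"
    by (simp add: cost_on_def B_def integrable_indicator_dist integrable_indicator)
  finally show ?thesis using A measure_service_interval[OF y] by (simp add: W_eq_cost_on B_def)
qed

lemma W_lipschitz:
  assumes y: "y \<in> {0..1}" and t: "t \<in> {0..1}"
  shows "\<bar>W t - W y\<bar> \<le> q * \<bar>t - y\<bar>"
proof -
  have one_side: "W t \<le> W y + q * \<bar>t - y\<bar>" if y: "y \<in> {0..1}" and t: "t \<in> {0..1}" for y t
  proof -
    have "W t \<le> cost_on (service_interval y) t"
      using measure_service_interval[OF y] by (intro W_le_cost_on[OF t]) auto
    also have "\<dots> \<le> (\<integral>x. indicator (service_interval y) x * \<bar>x - y\<bar>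
                          + \<bar>t - y\<bar> * indicator (service_interval y) x \<partial>\<mu>)"
      unfolding cost_on_def
      by (intro integral_mono Bochner_Integration.integrable_add integrable_mult_right
          integrable_indicator_dist integrable_indicator) (auto simp: indicator_def)
    also have "\<dots> = W y + q * \<bar>t - y\<bar>"
      by (simp add: W_eq_cost_on cost_on_def integrable_indicator_dist integrable_indicator
          measure_service_interval[OF y])
    finally show ?thesis .
  qed
  show ?thesis using one_side[OF y t] one_side[OF t y] by (auto simp: abs_minus_commute)
qed

lemma W_continuous: "continuous_on {0..1} W"
proof -
  have "q-lipschitz_on {0..1} W"
    by (rule lipschitz_onI) (use W_lipschitz q_pos in \<open>auto simp: dist_real_def\<close>)
  then show ?thesis by (rule lipschitz_on_continuous_on)
qed

lemma W_attains_min: "\<exists>y\<in>{0..1}. \<forall>z\<in>{0..1}. W y \<le> W z"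
  by (intro continuous_attains_inf W_continuous) auto

text \<open>The function \<open>x \<mapsto> \<bar>x - y\<bar> - \<bar>x - t\<bar>\<close> equals \<open>y - t\<close> left of both points, \<open>t - y\<close> right of
  both, and is bounded by \<open>\<bar>y - t\<bar>\<close> between them.\<close>
lemma cost_on_diff_le:
  assumes A [measurable]: "A \<in> sets borel"
  shows "cost_on A y - cost_on A t
    \<le> (y - t) * (measure \<mu> (A \<inter> {..<t}) - measure \<mu> (A \<inter> {t<..}))
      + 2 * \<bar>y - t\<bar> * measure \<mu> {min y t..max y t}"
proof -
  have "cost_on A y - cost_on A t = (\<integral>x. indicator A x * (\<bar>x - y\<bar> - \<bar>x - t\<bar>) \<partial>\<mu>)"
    by (simp add: cost_on_def integrable_indicator_dist right_diff_distrib)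
  also have "\<dots> \<le> (\<integral>x. (y - t) * (indicator (A \<inter> {..<t}) x - indicator (A \<inter> {t<..}) x)
                        + 2 * \<bar>y - t\<bar> * indicator {min y t..max y t} x \<partial>\<mu>)"
  proof (rule integral_mono)
    show "indicator A x * (\<bar>x - y\<bar> - \<bar>x - t\<bar>)
        \<le> (y - t) * (indicator (A \<inter> {..<t}) x - indicator (A \<inter> {t<..}) x)
          + 2 * \<bar>y - t\<bar> * indicator {min y t..max y t} x" for x
      by (cases "x \<in> A"; cases "x < min y t"; cases "max y t < x") (auto simp: indicator_def abs_if)
    show "integrable \<mu> (\<lambda>x. indicator A x * (\<bar>x - y\<bar> - \<bar>x - t\<bar>))"
      using Bochner_Integration.integrable_diff[OF integrable_indicator_dist integrable_indicator_dist]
      by (simp add: right_diff_distrib)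
  qed (intro Bochner_Integration.integrable_add integrable_mult_right Bochner_Integration.integrable_diff
      integrable_indicator; simp)
  also have "\<dots> = (y - t) * (measure \<mu> (A \<inter> {..<t}) - measure \<mu> (A \<inter> {t<..}))
                  + 2 * \<bar>y - t\<bar> * measure \<mu> {min y t..max y t}"
    by (simp add: integrable_indicator)
  finally show ?thesis .
qed

lemma measure_below_zero: "measure \<mu> (A \<inter> {..<0}) = 0"
  and measure_above_one: "measure \<mu> (A \<inter> {1<..}) = 0" if "A \<in> sets borel"
proof -
  have "A \<inter> {..<0} \<inter> {0..1} = {}" "A \<inter> {1<..} \<inter> {0..1} = {}" by auto
  then show "measure \<mu> (A \<inter> {..<0}) = 0" "measure \<mu> (A \<inter> {1<..}) = 0"
    using that measure_inter_unit_interval[of "A \<inter> {..<0}"] measure_inter_unit_interval[of "A \<inter> {1<..}"]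
    by simp_all
qed

text \<open>\<open>W\<close> lies below the cost of the service interval of \<open>ybar\<close>, which changes to first order by
  the mass imbalance of that interval around \<open>ybar\<close>.\<close>
lemma minimizer_perturbation:
  assumes yb: "ybar \<in> {0..1}" and min: "\<And>z. z \<in> {0..1} \<Longrightarrow> W ybar \<le> W z" and y: "y \<in> {0..1}"
  defines "A \<equiv> service_interval ybar"
  shows "0 \<le> (y - ybar) * (measure \<mu> (A \<inter> {..<ybar}) - measure \<mu> (A \<inter> {ybar<..}))
              + 2 * density_bound * (y - ybar)\<^sup>2"
proof -
  have "W ybar \<le> cost_on A y"
    using order_trans[OF min[OF y] W_le_cost_on[OF y service_interval_borel measure_service_interval[OF yb]]]
    by (simp add: A_def)
  also have "\<dots> \<le> W ybar + (y - ybar) * (measure \<mu> (A \<inter> {..<ybar}) - measure \<mu> (A \<inter> {ybar<..}))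
      + 2 * \<bar>y - ybar\<bar> * measure \<mu> {min y ybar..max y ybar}"
    using cost_on_diff_le[of A y ybar] by (simp add: A_def W_eq_cost_on)
  finally have "0 \<le> (y - ybar) * (measure \<mu> (A \<inter> {..<ybar}) - measure \<mu> (A \<inter> {ybar<..}))
      + 2 * \<bar>y - ybar\<bar> * measure \<mu> {min y ybar..max y ybar}"
    by simp
  moreover have "measure \<mu> {min y ybar..max y ybar} \<le> density_bound * (max y ybar - min y ybar)"
    by (rule measure_Icc_le) simp
  then have "2 * \<bar>y - ybar\<bar> * measure \<mu> {min y ybar..max y ybar}
      \<le> 2 * \<bar>y - ybar\<bar> * (density_bound * \<bar>y - ybar\<bar>)"
    by (intro mult_left_mono) (auto simp: max_def min_def)
  ultimately show ?thesis by (simp add: power2_eq_square abs_mult_self_eq algebra_simps)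
qed

lemma minimizer_balanced:
  assumes yb: "ybar \<in> {0..1}" and min: "\<And>z. z \<in> {0..1} \<Longrightarrow> W ybar \<le> W z"
  defines "A \<equiv> service_interval ybar"
  shows "measure \<mu> (A \<inter> {..<ybar}) = measure \<mu> (A \<inter> {ybar<..})"
proof -
  define L where "L = measure \<mu> (A \<inter> {..<ybar})"
  define R where "R = measure \<mu> (A \<inter> {ybar<..})"
  have perturb: "0 \<le> (y - ybar) * (L - R) + 2 * density_bound * (y - ybar)\<^sup>2" if "y \<in> {0..1}" for y
    using minimizer_perturbation[OF yb min that] by (simp add: L_def R_def A_def)
  have "R \<le> L"
  proof (cases "ybar < 1")
    case True
    have "0 \<le> L - R"
    proof (rule nonneg_if_quadratic_perturbation_nonneg[of "1 - ybar"])
      show "0 \<le> h * (L - R) + 2 * density_bound * h\<^sup>2" if "0 < h" "h \<le> 1 - ybar" for h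
        using perturb[of "ybar + h"] that yb by simp
    qed (use True in simp)
    then show ?thesis by simp
  next
    case False
    then show ?thesis using yb measure_above_one[of A] by (simp add: L_def R_def A_def)
  qed
  moreover have "L \<le> R"
  proof (cases "0 < ybar")
    case True
    have "0 \<le> R - L"
    proof (rule nonneg_if_quadratic_perturbation_nonneg[of ybar])
      show "0 \<le> h * (R - L) + 2 * density_bound * h\<^sup>2" if "0 < h" "h \<le> ybar" for h
        using perturb[of "ybar - h"] that yb by (simp add: algebra_simps)
    qed (use True in simp)
    then show ?thesis by simp
  next
    case False
    then show ?thesis using yb measure_below_zero[of A] by (simp add: L_def R_def A_def)
  qed
  ultimately show ?thesis by (simp add: L_def R_def)
qed

text \<open>The percentile mechanism only locates the level set of \<open>F\<close> through \<open>ybar\<close>. Between two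
  points of that set \<open>\<mu>\<close> has no mass, so by \<open>cost_on_diff_le\<close> and the balance at \<open>ybar\<close>
  moving the service interval of \<open>ybar\<close> there does not increase its cost.\<close>
lemma W_eq_on_cdf_level:
  assumes yb: "ybar \<in> {0..1}" and min: "\<And>z. z \<in> {0..1} \<Longrightarrow> W ybar \<le> W z"
    and t: "t \<in> {0..1}" and level: "F t = F ybar"
  shows "W t = W ybar"
proof -
  define A where "A = service_interval ybar"
  have "measure \<mu> {min t ybar..max t ybar} = 0"
    using measure_Icc_cdf[of "min t ybar" "max t ybar"] level by (simp add: min_def max_def)
  then have "cost_on A t - cost_on A ybar \<le> 0"
    using cost_on_diff_le[of A t ybar] minimizer_balanced[OF yb min] by (simp add: A_def)
  then have "W t \<le> W ybar"
    using W_le_cost_on[OF t, of A] measure_service_interval[OF yb] by (simp add: A_def W_eq_cost_on)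
  then show ?thesis using min[OF t] by simp
qed

lemma cdf_level_interval:
  assumes yb: "ybar \<in> {0..1}"
  obtains a b where "0 \<le> a" "a \<le> ybar" "ybar \<le> b" "b \<le> 1"
    "\<And>t. a \<le> t \<Longrightarrow> t \<le> b \<Longrightarrow> F t = F ybar"
    "\<And>s. 0 \<le> s \<Longrightarrow> s < a \<Longrightarrow> F s < F ybar"
    "\<And>s. b < s \<Longrightarrow> s \<le> 1 \<Longrightarrow> F ybar < F s"
proof -
  define I where "I = {t \<in> {0..1}. F t = F ybar}"
  have "closed I" unfolding I_def by (intro continuous_closed_preimage_constant cdf_continuous) auto
  have yI: "ybar \<in> I" using yb by (simp add: I_def)
  have bdd: "bdd_below I" "bdd_above I" unfolding I_def by (auto intro: bdd_belowI[of _ 0] bdd_aboveI[of _ 1])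
  define a where "a = Inf I"
  define b where "b = Sup I"
  have "a \<in> I" "b \<in> I"
    unfolding a_def b_def using yI bdd \<open>closed I\<close> by (auto intro: closed_contains_Inf closed_contains_Sup)
  then have ab: "0 \<le> a" "b \<le> 1" "F a = F ybar" "F b = F ybar" by (auto simp: I_def)
  have extremal: "a \<le> t" "t \<le> b" if "t \<in> I" for t
    unfolding a_def b_def using that bdd by (auto intro: cInf_lower cSup_upper)
  show ?thesis
  proof (rule that[OF ab(1) extremal(1)[OF yI] extremal(2)[OF yI] ab(2)])
    show "F t = F ybar" if "a \<le> t" "t \<le> b" for t
      using that cdf_mono[of a t] cdf_mono[of t b] ab by simp
    show "F s < F ybar" if "0 \<le> s" "s < a" for s
    proof -
      have "s \<notin> I" using extremal(1)[of s] that by auto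
      then show ?thesis
        using that cdf_mono[of s a] ab extremal(1)[OF yI] yb by (force simp: I_def)
    qed
    show "F ybar < F s" if "b < s" "s \<le> 1" for s
    proof -
      have "s \<notin> I" using extremal(2)[of s] that by auto
      then show ?thesis
        using that cdf_mono[of b s] ab extremal(2)[OF yI] yb by (force simp: I_def)
    qed
  qed
qed

section \<open>Convergence of the expected welfare\<close>

definition tent :: "real \<Rightarrow> real \<Rightarrow> real" where
  "tent t x = max 0 (rad t - \<bar>x - t\<bar>)"

lemma tent_measurable [measurable]: "tent t \<in> borel_measurable borel"
  unfolding tent_def by measurable

lemma tent_range: "t \<in> {0..1} \<Longrightarrow> tent t x \<in> {0..1}"
  using radius_props[of t] by (auto simp: tent_def)

lemma integral_tent: "t \<in> {0..1} \<Longrightarrow> (\<integral>x. tent t x \<partial>\<mu>) = rad t * q - W t"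
proof -
  assume t: "t \<in> {0..1}"
  have "tent t = (\<lambda>x. rad t * indicator (service_interval t) x - indicator (service_interval t) x * \<bar>x - t\<bar>)"
    by (auto simp: fun_eq_iff tent_def service_interval_def indicator_def)
  then show ?thesis
    by (simp add: integrable_indicator integrable_indicator_dist W_eq_cost_on cost_on_def
        measure_service_interval[OF t])
qed

lemma social_welfare_close_if_empirical_close:
  assumes n: "n > 0" and x: "\<And>i. i < n \<Longrightarrow> x i \<in> {0..1}" and t: "t \<in> {0..1}"
    and tent_close: "\<bar>(\<Sum>i<n. tent t (x i)) / real n - (rad t * q - W t)\<bar> < e"
    and mass_close: "\<bar>(\<Sum>i<n. indicator (service_interval t) (x i)) / real n - q\<bar> < e"
  shows "\<bar>social_welfare q n x t - (q - W t)\<bar> \<le> 2 * e + 2 / real n"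
proof -
  define r where "r = rad t"
  define k where "k = real (nat \<lfloor>q * real n\<rfloor>) / real n"
  define H where "H = (\<Sum>i<n. tent t (x i)) / real n"
  define G where "G = (\<Sum>i<n. indicator (service_interval t) (x i)) / real n"
  have r: "0 \<le> r" "r \<le> 1" using radius_props[OF t] by (auto simp: r_def)
  have "real (card {i. i < n \<and> x i \<in> service_interval t}) = G * real n"
    using n by (simp add: G_def card_in_eq_sum_indicator)
  moreover have "{i. i < n \<and> x i \<in> service_interval t} = {i. i < n \<and> \<bar>x i - t\<bar> \<le> r}"
    by (auto simp: service_interval_def r_def abs_le_iff)
  moreover have "(\<Sum>i<n. max 0 (r - \<bar>x i - t\<bar>)) = H * real n"
    using n by (simp add: H_def tent_def r_def)
  ultimately have "\<bar>real n * social_welfare q n x t - (k * real n * (1 - r) + H * real n)\<bar>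
      \<le> \<bar>G * real n - k * real n\<bar>"
    using social_welfare_tent_estimate[of q n x t r] q_pos q_less_1 n x t r by (simp add: k_def)
  also have "real n * social_welfare q n x t - (k * real n * (1 - r) + H * real n)
      = real n * (social_welfare q n x t - (k * (1 - r) + H))" by (simp add: algebra_simps)
  also have "G * real n - k * real n = real n * (G - k)" by (simp add: algebra_simps)
  finally have SW: "\<bar>social_welfare q n x t - (k * (1 - r) + H)\<bar> \<le> \<bar>G - k\<bar>"
    using n by (simp add: abs_mult)
  have "0 \<le> q * real n" using q_pos by simp
  then have "\<bar>real (nat \<lfloor>q * real n\<rfloor>) - q * real n\<bar> \<le> 1" by linarith
  then have k: "\<bar>k - q\<bar> \<le> 1 / real n"
    using n by (simp add: k_def field_simps abs_divide[symmetric])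
  have "\<bar>(k - q) * (1 - r)\<bar> \<le> \<bar>k - q\<bar>" using r by (simp add: abs_mult mult_left_le)
  moreover have "social_welfare q n x t - (q - W t)
      = (social_welfare q n x t - (k * (1 - r) + H)) + (k - q) * (1 - r) + (H - (r * q - W t))"
    by (simp add: algebra_simps)
  moreover have "\<bar>H - (r * q - W t)\<bar> < e" "\<bar>G - q\<bar> < e"
    using tent_close mass_close by (simp_all add: H_def G_def r_def)
  ultimately show ?thesis using SW k by linarith
qed

lemma social_welfare_close_uniform:
  assumes n: "n > 0" and N: "N > 0" and x: "\<And>i. i < n \<Longrightarrow> x i \<in> {0..1}"
    and grid: "\<And>m. m \<le> N \<Longrightarrow>
       \<bar>(\<Sum>i<n. tent (real m / real N) (x i)) / real n - (rad (real m / real N) * q - W (real m / real N))\<bar> < e \<and>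
       \<bar>(\<Sum>i<n. indicator (service_interval (real m / real N)) (x i)) / real n - q\<bar> < e"
    and y: "y \<in> {0..1}"
  shows "\<bar>social_welfare q n x y - (q - W y)\<bar> \<le> 2 * e + 2 / real n + 2 / real N"
proof -
  define m where "m = nat \<lfloor>y * real N\<rfloor>"
  define t where "t = real m / real N"
  have "0 \<le> y * real N" "y * real N \<le> real N" using y by (auto simp: mult_left_le_one_le)
  then have m: "real m \<le> y * real N" "y * real N < real m + 1" "m \<le> N"
    unfolding m_def by linarith+
  have t: "t \<in> {0..1}" using m(3) N by (simp add: t_def field_simps)
  have "y - t = (y * real N - real m) / real N" using N by (simp add: t_def field_simps)
  then have "0 \<le> y - t" "y - t \<le> 1 / real N"
    using m(1,2) N by (simp_all add: divide_right_mono)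
  then have t_close: "\<bar>y - t\<bar> \<le> 1 / real N" by simp
  have "\<bar>social_welfare q n x y - social_welfare q n x t\<bar> \<le> \<bar>t - y\<bar>"
    using social_welfare_lipschitz floor_capacity_le q_pos q_less_1 by simp
  moreover have "\<bar>W y - W t\<bar> \<le> \<bar>y - t\<bar>"
    using W_lipschitz[OF t y] q_less_1 mult_left_le_one_le[of "\<bar>y - t\<bar>" q] q_pos by linarith
  moreover have "\<bar>social_welfare q n x t - (q - W t)\<bar> \<le> 2 * e + 2 / real n"
    using social_welfare_close_if_empirical_close[OF n x t] grid[OF m(3)] by (simp add: t_def)
  ultimately show ?thesis using t_close by (simp add: abs_minus_commute)
qed

definition test_functions :: "real \<Rightarrow> real \<Rightarrow> real \<Rightarrow> nat \<Rightarrow> (real \<Rightarrow> real) set" where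
  "test_functions a b e N =
     (\<lambda>m. tent (real m / real N)) ` {..N}
       \<union> (\<lambda>m. indicator (service_interval (real m / real N))) ` {..N}
       \<union> {indicator {..a - e}, indicator {..b + e}}"

lemma test_functions:
  assumes "g \<in> test_functions a b e N"
  shows "g \<in> borel_measurable borel" "AE x in \<mu>. g x \<in> {0..1}"
proof -
  show "g \<in> borel_measurable borel" using assms by (auto simp: test_functions_def)
  have grid: "real m / real N \<in> {0..1}" if "m \<le> N" for m
    using that by (cases "N = 0") (auto simp: field_simps)
  have "g x \<in> {0..1}" if "x \<in> {0..1}" for x
    using assms tent_range[OF grid] by (auto simp: test_functions_def indicator_def)
  then show "AE x in \<mu>. g x \<in> {0..1}" using AE_unit_interval by (auto elim: eventually_mono)
qed

lemma finite_test_functions: "finite (test_functions a b e N)"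
  by (simp add: test_functions_def)

lemma percentile_mech_between:
  assumes n: "n > 0" and p: "0 \<le> p" "p \<le> 1" and x: "\<And>i. i < n \<Longrightarrow> x i \<in> {0..1}"
    and n\<eta>: "1 \<le> real n * \<eta>"
    and gap_low: "0 \<le> s \<Longrightarrow> F s + 2 * \<eta> \<le> p"
    and freq_low: "\<bar>(\<Sum>i<n. indicator {..s} (x i)) / real n - F s\<bar> < \<eta>"
    and gap_high: "t \<le> 1 \<Longrightarrow> p + 2 * \<eta> \<le> F t"
    and freq_high: "\<bar>(\<Sum>i<n. indicator {..t} (x i)) / real n - F t\<bar> < \<eta>"
  shows "s \<le> percentile_mech p n x" "percentile_mech p n x \<le> t"
proof -
  have "1 / real n \<le> \<eta>" using n n\<eta> by (simp add: field_simps)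
  have Y: "percentile_mech p n x \<in> {0..1}" using n p x by (rule percentile_mech_range)
  show "s \<le> percentile_mech p n x"
  proof (cases "0 \<le> s")
    case True
    then have "(\<Sum>i<n. indicator {..s} (x i)) / real n < p - 1 / real n"
      using freq_low gap_low \<open>1 / real n \<le> \<eta>\<close> by (simp add: abs_less_iff)
    then show ?thesis using less_percentile_mech_if_frequency_less[OF n p] by fastforce
  qed (use Y in simp)
  show "percentile_mech p n x \<le> t"
  proof (cases "t \<le> 1")
    case True
    then have "p < (\<Sum>i<n. indicator {..t} (x i)) / real n"
      using freq_high gap_high by (simp add: abs_less_iff)
    then show ?thesis by (rule percentile_mech_le_if_frequency_greater[OF n p])
  qed (use Y in simp)
qed

text \<open>The empirical cdf at \<open>a - e\<close> and \<open>b + e\<close>, together with the gaps of \<open>F\<close> there, pins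
  the percentile point to within \<open>e\<close> of \<open>[a, b]\<close>, where \<open>W\<close> is constant.\<close>
lemma social_welfare_percentile_close:
  assumes ab: "0 \<le> a" "a \<le> b" "b \<le> 1" and W_ab: "\<And>t. a \<le> t \<Longrightarrow> t \<le> b \<Longrightarrow> W t = w"
    and p: "0 \<le> p" "p \<le> 1" and N: "N > 0" "1 / real N \<le> e"
    and \<eta>: "\<eta> \<le> e" "1 \<le> real n * \<eta>"
    and gap_low: "0 \<le> a - e \<Longrightarrow> F (a - e) + 2 * \<eta> \<le> p"
    and gap_high: "b + e \<le> 1 \<Longrightarrow> p + 2 * \<eta> \<le> F (b + e)"
    and x: "\<And>i. i < n \<Longrightarrow> x i \<in> {0..1}"
    and close: "\<And>g. g \<in> test_functions a b e N \<Longrightarrow> \<bar>(\<Sum>i<n. g (x i)) / real n - (\<integral>x. g x \<partial>\<mu>)\<bar> < \<eta>"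
  shows "\<bar>social_welfare q n x (percentile_mech p n x) - (q - w)\<bar> \<le> 7 * e"
proof -
  define Y where "Y = percentile_mech p n x"
  have "0 < real n * \<eta>" using \<eta> by linarith
  then have "0 < \<eta>" "n > 0" by (simp_all add: zero_less_mult_iff)
  moreover have "1 \<le> real n * e" using \<eta> mult_left_mono[OF \<eta>(1), of "real n"] by simp
  ultimately have n_inv: "1 / real n \<le> e" by (simp add: field_simps)
  have "\<bar>(\<Sum>i<n. indicator {..s} (x i)) / real n - F s\<bar> < \<eta>" if "s \<in> {a - e, b + e}" for s
    using close[of "indicator {..s}"] that by (auto simp: test_functions_def cdf_eq)
  then have "a - e \<le> Y" "Y \<le> b + e"
    unfolding Y_def using percentile_mech_between[OF \<open>n > 0\<close> p x \<eta>(2) gap_low _ gap_high] by auto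
  then obtain t where t: "a \<le> t" "t \<le> b" "\<bar>Y - t\<bar> \<le> e"
    using ab \<open>0 < \<eta>\<close> \<eta>(1) by (intro that[of "max a (min b Y)"]) (auto simp: abs_le_iff max_def min_def)
  have Y: "Y \<in> {0..1}" unfolding Y_def using \<open>n > 0\<close> p x by (rule percentile_mech_range)
  have "\<bar>W Y - w\<bar> \<le> e"
    using W_lipschitz[of t Y] t ab Y W_ab[OF t(1,2)] q_less_1 mult_left_le_one_le[of "\<bar>Y - t\<bar>" q] q_pos
    by (simp add: abs_minus_commute)
  moreover have "\<bar>social_welfare q n x Y - (q - W Y)\<bar> \<le> 2 * e + 2 / real n + 2 / real N"
  proof (rule social_welfare_close_uniform[OF \<open>n > 0\<close> N(1) x _ Y])
    fix m assume "m \<le> N"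
    then have "real m / real N \<in> {0..1}" using N(1) by (simp add: field_simps)
    then show "\<bar>(\<Sum>i<n. tent (real m / real N) (x i)) / real n
          - (rad (real m / real N) * q - W (real m / real N))\<bar> < e
        \<and> \<bar>(\<Sum>i<n. indicator (service_interval (real m / real N)) (x i)) / real n - q\<bar> < e"
      using close[of "tent (real m / real N)"] close[of "indicator (service_interval (real m / real N))"]
        \<open>m \<le> N\<close> \<eta>(1)
      by (auto simp: test_functions_def integral_tent measure_service_interval)
  qed
  ultimately show ?thesis using N(2) n_inv by (simp add: Y_def)
qed

lemma expected_welfare_deviation_le:
  assumes G: "finite G" "\<And>g. g \<in> G \<Longrightarrow> g \<in> borel_measurable borel"
      "\<And>g. g \<in> G \<Longrightarrow> AE x in \<mu>. g x \<in> {0..1}"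
    and n: "n > 0" and \<eta>: "0 \<le> \<eta>" and p: "0 \<le> p" "p \<le> 1" and \<epsilon>: "0 \<le> \<epsilon>"
    and good: "\<And>x. (\<And>i. i < n \<Longrightarrow> x i \<in> {0..1}) \<Longrightarrow>
        (\<And>g. g \<in> G \<Longrightarrow> \<bar>(\<Sum>i<n. g (x i)) / real n - (\<integral>y. g y \<partial>\<mu>)\<bar> < \<eta>) \<Longrightarrow>
        \<bar>social_welfare q n x (percentile_mech p n x) - c\<bar> \<le> \<epsilon>"
  shows "\<bar>expected_SW_PM \<mu> q p n - c\<bar> \<le> \<epsilon> + (1 + \<bar>c\<bar>) * (2 * real (card G) * exp (- 2 * real n * \<eta>\<^sup>2))"
proof -
  define P where "P = PiM {..<n} (\<lambda>_. \<mu>)"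
  define Z where "Z = (\<lambda>\<omega>. social_welfare q n \<omega> (percentile_mech p n \<omega>))"
  define B where "B = {\<omega> \<in> space P. \<exists>g\<in>G. \<eta> \<le> \<bar>(\<Sum>i<n. g (\<omega> i)) / real n - (\<integral>x. g x \<partial>\<mu>)\<bar>}"
  interpret P: prob_space P unfolding P_def by (rule prob_space_PiM) (rule prob)
  have B: "B \<in> P.events" "P.prob B \<le> 2 * real (card G) * exp (- 2 * real n * \<eta>\<^sup>2)"
    using empirical_means_deviation_prob[OF prob G(1) G(2)[THEN borel_measurable_mu_iff[THEN iffD2]]
        G(3) n \<eta>]
    unfolding B_def P_def by simp_all
  have "AE \<omega> in P. \<forall>i\<in>{..<n}. \<omega> i \<in> {0..1}"
    unfolding P_def by (intro AE_finite_allI AE_PiM_component prob AE_unit_interval) auto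
  then have sample: "AE \<omega> in P. \<omega> \<in> space P \<and> (\<forall>i\<in>{..<n}. \<omega> i \<in> {0..1})"
    by (simp add: AE_space)
  have Z_range: "Z \<omega> \<in> {0..1}" if "\<forall>i\<in>{..<n}. \<omega> i \<in> {0..1}" for \<omega>
    using that q_pos q_less_1 unfolding Z_def by (intro social_welfare_percentile_mech_bounds n p) auto
  have "Z \<in> borel_measurable P"
    unfolding Z_def P_def using p q_pos q_less_1
    by (intro measurable_social_welfare_percentile_mech) simp_all
  then have "integrable P Z"
    by (intro P.integrable_const_bound[of _ 1]) (use sample Z_range in \<open>auto elim: eventually_mono\<close>)
  moreover have "AE \<omega> in P. \<bar>Z \<omega> - c\<bar> \<le> \<epsilon> + (1 + \<bar>c\<bar>) * indicator B \<omega>"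
    using sample
  proof (rule eventually_mono)
    fix \<omega> :: "nat \<Rightarrow> real" assume \<omega>: "\<omega> \<in> space P \<and> (\<forall>i\<in>{..<n}. \<omega> i \<in> {0..1})"
    show "\<bar>Z \<omega> - c\<bar> \<le> \<epsilon> + (1 + \<bar>c\<bar>) * indicator B \<omega>"
    proof (cases "\<omega> \<in> B")
      case True
      have "Z \<omega> \<in> {0..1}" using Z_range \<omega> by blast
      then have "\<bar>Z \<omega> - c\<bar> \<le> 1 + \<bar>c\<bar>" by (simp only: atLeastAtMost_iff) linarith
      then show ?thesis using True \<epsilon> by simp
    next
      case False
      then have "\<bar>Z \<omega> - c\<bar> \<le> \<epsilon>" unfolding Z_def using \<omega> by (intro good) (auto simp: B_def)
      then show ?thesis using False by simp
    qed
  qed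
  ultimately have "\<bar>P.expectation Z - c\<bar> \<le> \<epsilon> + (1 + \<bar>c\<bar>) * P.prob B"
    by (intro P.abs_expectation_diff_le B(1))
  also have "\<dots> \<le> \<epsilon> + (1 + \<bar>c\<bar>) * (2 * real (card G) * exp (- 2 * real n * \<eta>\<^sup>2))"
    using B(2) by (intro add_left_mono mult_left_mono) simp_all
  finally show ?thesis by (simp add: expected_SW_PM_def Z_def P_def)
qed

lemma expected_welfare_estimate:
  assumes yb: "ybar \<in> {0..1}" and min: "\<And>z. z \<in> {0..1} \<Longrightarrow> W ybar \<le> W z" and e: "e > 0"
  obtains \<eta> C where "\<eta> > 0"
    "\<And>n. 1 \<le> real n * \<eta> \<Longrightarrow>
       \<bar>expected_SW_PM \<mu> q (F ybar) n - (q - W ybar)\<bar> \<le> 7 * e + C * exp (- (2 * \<eta>\<^sup>2) * real n)"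
proof -
  obtain a b where ab: "0 \<le> a" "a \<le> ybar" "ybar \<le> b" "b \<le> 1"
    and level: "\<And>t. a \<le> t \<Longrightarrow> t \<le> b \<Longrightarrow> F t = F ybar"
    and below: "\<And>s. 0 \<le> s \<Longrightarrow> s < a \<Longrightarrow> F s < F ybar"
    and above: "\<And>s. b < s \<Longrightarrow> s \<le> 1 \<Longrightarrow> F ybar < F s"
    using cdf_level_interval[OF yb] by blast
  have W_ab: "W t = W ybar" if "a \<le> t" "t \<le> b" for t
    using W_eq_on_cdf_level[OF yb min _ level[OF that]] that ab by simp
  define p where "p = F ybar"
  have p: "0 \<le> p" "p \<le> 1" by (simp_all add: p_def cdf_bounds)
  define N :: nat where "N = nat \<lceil>1 / e\<rceil> + 1"
  have "1 / e < real N" using real_nat_ceiling_ge[of "1 / e"] by (simp add: N_def)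
  moreover have "N > 0" by (simp add: N_def)
  ultimately have N: "N > 0" "1 / real N \<le> e" using e by (auto simp: field_simps)
  define gap_low where "gap_low = (if 0 \<le> a - e then (p - F (a - e)) / 2 else 1)"
  define gap_high where "gap_high = (if b + e \<le> 1 then (F (b + e) - p) / 2 else 1)"
  define \<eta> where "\<eta> = min e (min gap_low gap_high)"
  have "0 < gap_low" "0 < gap_high"
    using e below[of "a - e"] above[of "b + e"] by (simp_all add: gap_low_def gap_high_def p_def)
  then have \<eta>: "\<eta> > 0" "\<eta> \<le> e" "\<eta> \<le> gap_low" "\<eta> \<le> gap_high" using e by (simp_all add: \<eta>_def)
  define C where "C = (1 + \<bar>q - W ybar\<bar>) * (2 * real (card (test_functions a b e N)))"
  show ?thesis
  proof (rule that[OF \<eta>(1)])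
    fix n assume n\<eta>: "1 \<le> real n * \<eta>"
    then have "n > 0" by (cases n) simp_all
    have "\<bar>expected_SW_PM \<mu> q p n - (q - W ybar)\<bar>
        \<le> 7 * e + (1 + \<bar>q - W ybar\<bar>) * (2 * real (card (test_functions a b e N)) * exp (- 2 * real n * \<eta>\<^sup>2))"
    proof (rule expected_welfare_deviation_le[OF finite_test_functions test_functions \<open>n > 0\<close> _ p])
      fix x assume "\<And>i. i < n \<Longrightarrow> x i \<in> {0..1}"
        and "\<And>g. g \<in> test_functions a b e N \<Longrightarrow> \<bar>(\<Sum>i<n. g (x i)) / real n - (\<integral>y. g y \<partial>\<mu>)\<bar> < \<eta>"
      then show "\<bar>social_welfare q n x (percentile_mech p n x) - (q - W ybar)\<bar> \<le> 7 * e"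
        using \<eta> ab by (intro social_welfare_percentile_close[OF ab(1) _ ab(4) W_ab p N \<eta>(2) n\<eta>])
          (auto simp: gap_low_def gap_high_def)
    qed (use \<eta> e in simp_all)
    then show "\<bar>expected_SW_PM \<mu> q (F ybar) n - (q - W ybar)\<bar> \<le> 7 * e + C * exp (- (2 * \<eta>\<^sup>2) * real n)"
      by (simp add: C_def p_def mult_ac)
  qed
qed

lemma expected_welfare_tendsto:
  assumes yb: "ybar \<in> {0..1}" and min: "\<And>z. z \<in> {0..1} \<Longrightarrow> W ybar \<le> W z"
  shows "expected_SW_PM \<mu> q (F ybar) \<longlonglongrightarrow> q - W ybar"
proof (rule LIMSEQ_if_exponentially_close)
  fix e :: real assume "e > 0"
  then obtain \<eta> C where \<eta>: "\<eta> > 0" and estimate: "\<And>n. 1 \<le> real n * \<eta> \<Longrightarrow>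
      \<bar>expected_SW_PM \<mu> q (F ybar) n - (q - W ybar)\<bar> \<le> e + C * exp (- (2 * \<eta>\<^sup>2) * real n)"
    using expected_welfare_estimate[OF yb min, of "e / 7"] by auto
  have "\<bar>expected_SW_PM \<mu> q (F ybar) n - (q - W ybar)\<bar> \<le> e + C * exp (- (2 * \<eta>\<^sup>2) * real n)"
    if "nat \<lceil>1 / \<eta>\<rceil> \<le> n" for n
  proof (rule estimate)
    show "1 \<le> real n * \<eta>"
      using that \<eta> real_nat_ceiling_ge[of "1 / \<eta>"] by (simp add: field_simps)
  qed
  moreover have "0 < 2 * \<eta>\<^sup>2" using \<eta> by simp
  ultimately show "\<exists>r>0. \<exists>C n0. \<forall>n\<ge>n0.
      \<bar>expected_SW_PM \<mu> q (F ybar) n - (q - W ybar)\<bar> \<le> e + C * exp (- r * real n)"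
    by blast
qed

end

theorem theorem3p4:
  fixes f :: "real \<Rightarrow> real" and q :: real
  assumes f_cont: "continuous_on {0..1} f"
    and f_nonneg: "\<And>x. x \<in> {0..1} \<Longrightarrow> 0 \<le> f x"
    and prob: "prob_space (mu_of f)"
    and q: "0 < q" "q < 1"
  shows "(\<exists>y\<in>{0..1}. \<forall>z\<in>{0..1}. W_cost (mu_of f) q y \<le> W_cost (mu_of f) q z)
       \<and> (\<forall>ybar\<in>{0..1}. (\<forall>z\<in>{0..1}. W_cost (mu_of f) q ybar \<le> W_cost (mu_of f) q z)
            \<longrightarrow> PM_optimal (mu_of f) q (cdf_of (mu_of f) ybar))"
proof -
  interpret facility_problem f q
    using f_cont prob q by (simp add: facility_problem_def facility_problem_axioms_def continuous_density_def)
  have "PM_optimal \<mu> q (F ybar)"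
    if "ybar \<in> {0..1}" "\<forall>z\<in>{0..1}. W ybar \<le> W z" for ybar
    unfolding PM_optimal_def using that expected_welfare_tendsto[of ybar] by auto
  then show ?thesis using W_attains_min by blast
qed

end
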